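(* Let $M\in\mathbb{Z}$, $N,Q\in\mathbb{N}$, and let $a_{M+1},\dots,a_{M+N}$ be complex numbers. For each positive integer $q$, \[ \frac{q}{\varphi(q)}\sum_{\xi\in G_1(q)}\Bigl|\sum_{n=M+1}^{M+N}a_n\,\xi(n)\Bigr|^2=\bigl(q+O(N)\bigr)\sum_{\substack{M<n\le M+N\\ \gcd(n,q)=1}}|a_n|^2, \] with an absolute implied constant (i.e. the left side minus $q\sum_{\gcd(n,q)=1}|a_n|^2$ is bounded in absolute value by $C N\sum_{\gcd(n,q)=1}|a_n|^2$ for an absolute constant $C$). Consequently \[ \sum_{q=1}^{Q}\frac{q}{\varphi(q)}\sum_{\xi\in G_1(q)}\Bigl|\sum_{n=M+1}^{M+N}a_n\,\xi(n)\Bigr|^2\ll (Q^2+QN)\sum_{n=M+1}^{M+N}|a_n|^2, \] with an absolute implied constant.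
   Context: $e(x)=\exp(2\pi i x)$ and $\varphi$ is Euler's function. For a positive integer $q$, $G_1(q)$ denotes the set of Dirichlet characters $\xi$ modulo $q^2$ such that $\xi(x)=e\!\left(\frac{x-1}{q^2}\right)$ for every integer $x\equiv 1\pmod q$. Dirichlet characters modulo $q^2$ vanish on integers not coprime to $q$. *)

theory Defs
  imports "HOL-Analysis.Analysis" "HOL-Number_Theory.Number_Theory"
begin

definition e :: "real \<Rightarrow> complex" where
  "e x = exp (2 * pi * \<i> * complex_of_real x)"

definition dirichlet_char :: "int \<Rightarrow> (int \<Rightarrow> complex) \<Rightarrow> bool" where
  "dirichlet_char m chi \<longleftrightarrow>
     (\<forall>n. chi (n + m) = chi n) \<and>
     (\<forall>a b. chi (a * b) = chi a * chi b) \<and>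
     chi 1 = 1 \<and>
     (\<forall>n. chi n = 0 \<longleftrightarrow> \<not> coprime n m)"

definition G1 :: "nat \<Rightarrow> (int \<Rightarrow> complex) set" where
  "G1 q = {\<xi>. dirichlet_char (int q ^ 2) \<xi> \<and>
              (\<forall>x. [x = 1] (mod int q) \<longrightarrow> \<xi> x = e (real_of_int (x - 1) / real q ^ 2))}"

end

(*
  The characters in G1(q) are exactly the characters modulo q^2 that agree with the additive
  character x |-> e((x - 1)/q^2) on the q residue classes x = 1 (mod q).  Averaging chi times
  the conjugate of that character over these classes detects membership in G1(q); combined with
  orthogonality of all characters modulo q^2 (constructed by extending characters of subgroups
  of (Z/q^2 Z)^* one cyclic factor at a time) this gives |G1(q)| = phi(q) and shows that
  sum_{xi in G1(q)} xi(n) conj(xi(k)) vanishes unless n = k (mod q), both coprime to q.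
  Expanding the square, the diagonal contributes phi(q) sum |a_n|^2, while each n has at most
  2 N/q off-diagonal partners k, each contributing at most phi(q) |a_n| |a_k|; the AM-GM
  inequality bounds the off-diagonal part by 2 (N/q) phi(q) sum |a_n|^2.  Summing the first
  estimate over q <= Q gives the second.
*)
theory Submission
  imports Defs
begin

section \<open>Dirichlet characters\<close>

lemma
  assumes "dirichlet_char m chi"
  shows dirichlet_char_add_modulus: "chi (n + m) = chi n"
    and dirichlet_char_mult: "chi (a * b) = chi a * chi b"
    and dirichlet_char_one: "chi 1 = 1"
    and dirichlet_char_eq_0_iff: "chi n = 0 \<longleftrightarrow> \<not> coprime n m"
  using assms unfolding dirichlet_char_def by blast+

lemma dirichlet_char_cong:
  assumes chi: "dirichlet_char m chi" and "[x = y] (mod m)"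
  shows "chi x = chi y"
proof -
  have shift: "\<forall>n. chi (n + m * k) = chi n" for k
  proof (induction k rule: int_induct[where k = 0])
    case (step1 i)
    then show ?case
      by (metis add.assoc dirichlet_char_add_modulus[OF chi] distrib_left mult.right_neutral)
  next
    case (step2 i)
    then show ?case
      by (metis add.assoc diff_add_cancel dirichlet_char_add_modulus[OF chi] distrib_left mult.right_neutral)
  qed simp
  obtain k where "y = x + m * k" using assms(2) cong_iff_lin by blast
  then show ?thesis using shift by simp
qed

lemma dirichlet_char_mod: "dirichlet_char m chi \<Longrightarrow> chi (x mod m) = chi x"
  using dirichlet_char_cong[of m chi "x mod m" x] by simp

lemma dirichlet_char_power: "dirichlet_char m chi \<Longrightarrow> chi (x ^ k) = chi x ^ k"
  by (induction k) (simp_all add: dirichlet_char_mult dirichlet_char_one)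

lemma euler_theorem_int:
  fixes x m :: int
  assumes "m > 0" "coprime x m"
  shows "[x ^ totient (nat m) = 1] (mod m)"
proof (cases "m = 1")
  case False
  with assms have "residues m" by (simp add: residues_def)
  then show ?thesis using assms(2) by (rule residues.euler_theorem)
qed simp

lemma coprime_if_cong_1: "[x = 1] (mod n) \<Longrightarrow> coprime x n"
  for x n :: int
  using coprime_cong_transfer_left[of 1 n x] by (simp add: cong_sym_eq)

lemma dirichlet_char_power_totient:
  assumes "dirichlet_char m chi" "m > 0" "coprime x m"
  shows "chi x ^ totient (nat m) = 1"
  using dirichlet_char_cong[OF assms(1) euler_theorem_int[OF assms(2,3)]]
  by (simp add: dirichlet_char_power[OF assms(1)] dirichlet_char_one[OF assms(1)])

lemma norm_dirichlet_char:
  assumes "dirichlet_char m chi" "m > 0" "coprime x m"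
  shows "norm (chi x) = 1"
proof -
  have "norm (chi x) ^ totient (nat m) = 1"
    by (metis dirichlet_char_power_totient[OF assms] norm_one norm_power)
  then show ?thesis
    using assms(2) power_eq_imp_eq_base[of "norm (chi x)" "totient (nat m)" 1] by simp
qed

lemma norm_dirichlet_char_le_1:
  assumes "dirichlet_char m chi" "m > 0"
  shows "norm (chi x) \<le> 1"
  using norm_dirichlet_char[OF assms] dirichlet_char_eq_0_iff[OF assms(1), of x]
  by (cases "coprime x m") auto

lemma cnj_mult_self_eq_1: "norm z = 1 \<Longrightarrow> cnj z * z = 1"
  by (metis complex_norm_square mult.commute of_real_1 power_one)

lemma dirichlet_char_eqI:
  assumes "dirichlet_char m chi" "dirichlet_char m chi'" "\<And>x. coprime x m \<Longrightarrow> chi x = chi' x"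
  shows "chi = chi'"
proof
  fix x show "chi x = chi' x"
    using assms dirichlet_char_eq_0_iff[OF assms(1), of x] dirichlet_char_eq_0_iff[OF assms(2), of x]
    by (cases "coprime x m") auto
qed

lemma dirichlet_char_principal: "dirichlet_char m (\<lambda>x. if coprime x m then 1 else 0)"
proof -
  have "coprime (n + m) m \<longleftrightarrow> coprime n m" for n by (simp add: coprime_iff_gcd_eq_1)
  then show ?thesis unfolding dirichlet_char_def by auto
qed

lemma dirichlet_char_times:
  assumes "dirichlet_char m chi" "dirichlet_char m chi'"
  shows "dirichlet_char m (\<lambda>x. chi x * chi' x)"
  using assms unfolding dirichlet_char_def by (simp add: ac_simps)

lemma finite_dirichlet_chars:
  assumes "m > 0"
  shows "finite {chi. dirichlet_char m chi}"
proof -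
  define t where "t = totient (nat m)"
  define V where "V = insert 0 {z::complex. z ^ t = 1}"
  have "t > 0" using assms by (simp add: t_def)
  then have "finite V" by (simp add: V_def finite_roots_unity)
  then have fin: "finite (PiE {0..<m} (\<lambda>_. V))" by (intro finite_PiE) auto
  have "{chi. dirichlet_char m chi} \<subseteq> (\<lambda>f x. f (x mod m)) ` PiE {0..<m} (\<lambda>_. V)"
  proof
    fix chi assume "chi \<in> {chi. dirichlet_char m chi}"
    then have chi: "dirichlet_char m chi" by simp
    have "chi x \<in> V" for x
      using dirichlet_char_power_totient[OF chi assms] dirichlet_char_eq_0_iff[OF chi]
      by (cases "coprime x m") (auto simp: V_def t_def)
    then have "restrict chi {0..<m} \<in> PiE {0..<m} (\<lambda>_. V)" by simp
    moreover have "chi = (\<lambda>x. restrict chi {0..<m} (x mod m))"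
      using assms dirichlet_char_mod[OF chi] by auto
    ultimately show "chi \<in> (\<lambda>f x. f (x mod m)) ` PiE {0..<m} (\<lambda>_. V)" by blast
  qed
  then show ?thesis using fin finite_surj by blast
qed

section \<open>Existence of characters\<close>

(* A subgroup of (Z/mZ)^* is represented by the union of its residue classes, and a character
   of it by a function on that union that is constant on residue classes. *)
definition unit_subgroup_mod :: "int \<Rightarrow> int set \<Rightarrow> bool" where
  "unit_subgroup_mod m S \<longleftrightarrow> 1 \<in> S \<and> (\<forall>x\<in>S. \<forall>y\<in>S. x * y \<in> S) \<and>
     (\<forall>x\<in>S. \<forall>y. [y = x] (mod m) \<longrightarrow> y \<in> S) \<and> (\<forall>x\<in>S. coprime x m)"

definition subgroup_char :: "int \<Rightarrow> int set \<Rightarrow> (int \<Rightarrow> complex) \<Rightarrow> bool" where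
  "subgroup_char m S psi \<longleftrightarrow> psi 1 = 1 \<and> (\<forall>x\<in>S. \<forall>y\<in>S. psi (x * y) = psi x * psi y) \<and>
     (\<forall>x\<in>S. \<forall>y. [y = x] (mod m) \<longrightarrow> psi y = psi x)"

definition adjoin_mod :: "int \<Rightarrow> int set \<Rightarrow> int \<Rightarrow> int set" where
  "adjoin_mod m S g = {y. \<exists>h\<in>S. \<exists>i. [y = h * g ^ i] (mod m)}"

lemma
  assumes "unit_subgroup_mod m S"
  shows unit_subgroup_mod_one: "1 \<in> S"
    and unit_subgroup_mod_mult: "x \<in> S \<Longrightarrow> y \<in> S \<Longrightarrow> x * y \<in> S"
    and unit_subgroup_mod_cong: "x \<in> S \<Longrightarrow> [y = x] (mod m) \<Longrightarrow> y \<in> S"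
    and unit_subgroup_mod_coprime: "x \<in> S \<Longrightarrow> coprime x m"
  using assms unfolding unit_subgroup_mod_def by blast+

lemma
  assumes "subgroup_char m S psi"
  shows subgroup_char_one: "psi 1 = 1"
    and subgroup_char_mult: "x \<in> S \<Longrightarrow> y \<in> S \<Longrightarrow> psi (x * y) = psi x * psi y"
    and subgroup_char_cong: "x \<in> S \<Longrightarrow> [y = x] (mod m) \<Longrightarrow> psi y = psi x"
  using assms unfolding subgroup_char_def by blast+

lemma unit_subgroup_mod_power: "unit_subgroup_mod m S \<Longrightarrow> x \<in> S \<Longrightarrow> x ^ k \<in> S"
  by (induction k) (simp_all add: unit_subgroup_mod_one unit_subgroup_mod_mult)

lemma subgroup_char_power:
  "unit_subgroup_mod m S \<Longrightarrow> subgroup_char m S psi \<Longrightarrow> x \<in> S \<Longrightarrow> psi (x ^ k) = psi x ^ k"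
  by (induction k) (simp_all add: subgroup_char_one subgroup_char_mult unit_subgroup_mod_power)

lemma unit_subgroup_mod_inverse:
  assumes "m > 0" "unit_subgroup_mod m S" "x \<in> S"
  obtains y where "y \<in> S" "[x * y = 1] (mod m)"
proof -
  define t where "t = totient (nat m)"
  have "t > 0" using assms(1) by (simp add: t_def)
  then have "x * x ^ (t - 1) = x ^ t" by (simp add: power_eq_if)
  moreover have "[x ^ t = 1] (mod m)"
    unfolding t_def using euler_theorem_int assms unit_subgroup_mod_coprime by blast
  ultimately show ?thesis using that unit_subgroup_mod_power[OF assms(2,3)] by metis
qed

lemma unit_subgroup_mod_mult_cancel:
  assumes "m > 0" "unit_subgroup_mod m S" "x \<in> S" "x * y \<in> S"
  shows "y \<in> S"
proof -
  obtain x' where "x' \<in> S" "[x * x' = 1] (mod m)"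
    using unit_subgroup_mod_inverse[OF assms(1-3)] .
  then have "[y = x' * (x * y)] (mod m)"
    by (metis cong_scalar_right cong_sym mult.assoc mult.commute mult_1)
  then show ?thesis
    using unit_subgroup_mod_cong[OF assms(2) unit_subgroup_mod_mult[OF assms(2) \<open>x' \<in> S\<close> assms(4)]]
    by blast
qed

lemma subgroup_char_nonzero:
  assumes "m > 0" "unit_subgroup_mod m S" "subgroup_char m S psi" "x \<in> S"
  shows "psi x \<noteq> 0"
proof -
  obtain y where y: "y \<in> S" "[x * y = 1] (mod m)"
    using unit_subgroup_mod_inverse[OF assms(1,2,4)] .
  have "psi x * psi y = psi 1"
    using subgroup_char_mult[OF assms(3,4) y(1)]
      subgroup_char_cong[OF assms(3) unit_subgroup_mod_one[OF assms(2)] y(2)] by simp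
  then show ?thesis using subgroup_char_one[OF assms(3)] by auto
qed

lemma relative_order_exists:
  assumes "m > 0" "unit_subgroup_mod m S" "coprime g m"
  obtains r where "r > 0" "g ^ r \<in> S" "\<And>k. g ^ k \<in> S \<Longrightarrow> r dvd k"
proof -
  define t where "t = totient (nat m)"
  have "t > 0" using assms(1) by (simp add: t_def)
  moreover have "g ^ t \<in> S"
    using unit_subgroup_mod_cong[OF assms(2) unit_subgroup_mod_one[OF assms(2)]]
      euler_theorem_int[OF assms(1,3)] by (simp add: t_def)
  ultimately have ex: "\<exists>r. 0 < r \<and> g ^ r \<in> S" by blast
  define r where "r = (LEAST r. 0 < r \<and> g ^ r \<in> S)"
  have r: "0 < r" "g ^ r \<in> S" using LeastI_ex[OF ex] by (simp_all add: r_def)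
  have "r dvd k" if k: "g ^ k \<in> S" for k
  proof (rule ccontr)
    assume "\<not> r dvd k"
    then have pos: "0 < k mod r" by (simp add: dvd_eq_mod_eq_0)
    have "g ^ k = (g ^ r) ^ (k div r) * g ^ (k mod r)"
      by (metis div_mult_mod_eq mult.commute power_add power_mult)
    then have "g ^ (k mod r) \<in> S"
      using unit_subgroup_mod_mult_cancel[OF assms(1,2) unit_subgroup_mod_power[OF assms(2) r(2)]] k
      by simp
    then have "r \<le> k mod r"
      using pos Least_le[of "\<lambda>r. 0 < r \<and> g ^ r \<in> S"] by (simp add: r_def[symmetric])
    then show False using mod_less_divisor[OF r(1), of k] by linarith
  qed
  then show ?thesis using that r by blast
qed

lemma mem_adjoin_mod_iff: "y \<in> adjoin_mod m S g \<longleftrightarrow> (\<exists>h\<in>S. \<exists>i. [y = h * g ^ i] (mod m))"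
  by (simp add: adjoin_mod_def)

lemma unit_subgroup_mod_adjoin:
  assumes "unit_subgroup_mod m S" "coprime g m"
  shows "unit_subgroup_mod m (adjoin_mod m S g)" "S \<subseteq> adjoin_mod m S g" "g \<in> adjoin_mod m S g"
proof -
  have "[x = x * g ^ 0] (mod m)" for x by simp
  then show sub: "S \<subseteq> adjoin_mod m S g" unfolding mem_adjoin_mod_iff subset_iff by blast
  have "[g = 1 * g ^ 1] (mod m)" by simp
  then show "g \<in> adjoin_mod m S g"
    using unit_subgroup_mod_one[OF assms(1)] unfolding mem_adjoin_mod_iff by blast
  have rep_mult: "[x * y = (h * h') * g ^ (i + j)] (mod m)"
    if "[x = h * g ^ i] (mod m)" "[y = h' * g ^ j] (mod m)" for x y h h' i j
    using cong_mult[OF that] by (simp add: power_add ac_simps)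
  show "unit_subgroup_mod m (adjoin_mod m S g)"
    unfolding unit_subgroup_mod_def
  proof (intro conjI ballI allI impI)
    show "1 \<in> adjoin_mod m S g" using sub unit_subgroup_mod_one[OF assms(1)] by blast
  next
    fix x y assume "x \<in> adjoin_mod m S g" "y \<in> adjoin_mod m S g"
    then show "x * y \<in> adjoin_mod m S g"
      using rep_mult unit_subgroup_mod_mult[OF assms(1)] unfolding mem_adjoin_mod_iff by blast
  next
    fix x y assume "x \<in> adjoin_mod m S g" "[y = x] (mod m)"
    then show "y \<in> adjoin_mod m S g" using cong_trans unfolding mem_adjoin_mod_iff by blast
  next
    fix x assume "x \<in> adjoin_mod m S g"
    then obtain h i where "h \<in> S" "[x = h * g ^ i] (mod m)" unfolding mem_adjoin_mod_iff by blast
    then show "coprime x m"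
      using unit_subgroup_mod_coprime[OF assms(1)] assms(2)
      by (metis coprime_cong_transfer_left coprime_mult_left_iff coprime_power_left_iff cong_sym)
  qed
qed

(* Extending psi by h * g^i |-> psi h * w^i is well defined because g^i in S forces r dvd i. *)
lemma subgroup_char_adjoin_well_defined:
  assumes m: "m > 0" and S: "unit_subgroup_mod m S" and psi: "subgroup_char m S psi"
    and g: "coprime g m" and r: "g ^ r \<in> S" "\<And>k. g ^ k \<in> S \<Longrightarrow> r dvd k"
    and w: "w ^ r = psi (g ^ r)"
    and h: "h \<in> S" "h' \<in> S" and eq: "[h * g ^ i = h' * g ^ j] (mod m)"
  shows "psi h * w ^ i = psi h' * w ^ j"
proof -
  have le_case: "psi h * w ^ i = psi h' * w ^ j"
    if h: "h \<in> S" "h' \<in> S" and eq: "[h * g ^ i = h' * g ^ j] (mod m)" and "j \<le> i" for h h' i j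
  proof -
    have "[(h * g ^ (i - j)) * g ^ j = h' * g ^ j] (mod m)"
      using eq \<open>j \<le> i\<close> by (simp add: mult.assoc power_add[symmetric])
    then have hg: "[h * g ^ (i - j) = h'] (mod m)"
      using g by (simp add: cong_mult_rcancel)
    then have "g ^ (i - j) \<in> S"
      using unit_subgroup_mod_mult_cancel[OF m S h(1)] unit_subgroup_mod_cong[OF S h(2)] by blast
    then obtain u where u: "i - j = r * u" using r(2) by blast
    have "[h' = h * (g ^ r) ^ u] (mod m)" using hg by (simp add: u power_mult cong_sym_eq)
    then have "psi h' = psi (h * (g ^ r) ^ u)"
      using subgroup_char_cong[OF psi unit_subgroup_mod_mult[OF S h(1) unit_subgroup_mod_power[OF S r(1)]]]
      by blast
    also have "\<dots> = psi h * w ^ (i - j)"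
      using subgroup_char_mult[OF psi h(1) unit_subgroup_mod_power[OF S r(1)]]
        subgroup_char_power[OF S psi r(1)] by (simp add: u w[symmetric] power_mult)
    finally show ?thesis using \<open>j \<le> i\<close> by (simp add: mult.assoc power_add[symmetric])
  qed
  show ?thesis
  proof (cases "j \<le> i")
    case True
    then show ?thesis using le_case[OF h eq] by simp
  next
    case False
    then show ?thesis using le_case[OF h(2,1) cong_sym[OF eq]] by simp
  qed
qed

lemma subgroup_char_extend:
  assumes m: "m > 0" and S: "unit_subgroup_mod m S" and psi: "subgroup_char m S psi"
    and g: "coprime g m" and r: "g ^ r \<in> S" "\<And>k. g ^ k \<in> S \<Longrightarrow> r dvd k"
    and w: "w ^ r = psi (g ^ r)"
  obtains psi' where "subgroup_char m (adjoin_mod m S g) psi'" "\<And>x. x \<in> S \<Longrightarrow> psi' x = psi x"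
    "psi' g = w"
proof -
  define rep where "rep y = (SOME p. fst p \<in> S \<and> [y = fst p * g ^ snd p] (mod m))" for y
  define psi' where "psi' y = psi (fst (rep y)) * w ^ snd (rep y)" for y
  have psi'_eq: "psi' y = psi h * w ^ i" if "h \<in> S" "[y = h * g ^ i] (mod m)" for y h i
  proof -
    have "fst (rep y) \<in> S \<and> [y = fst (rep y) * g ^ snd (rep y)] (mod m)"
      unfolding rep_def by (rule someI[of _ "(h, i)"]) (use that in simp)
    then have "fst (rep y) \<in> S" "[fst (rep y) * g ^ snd (rep y) = h * g ^ i] (mod m)"
      using cong_trans[OF cong_sym that(2)] by blast+
    then show ?thesis
      using subgroup_char_adjoin_well_defined[OF m S psi g r w _ that(1)] by (simp add: psi'_def)
  qed
  have "subgroup_char m (adjoin_mod m S g) psi'"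
    unfolding subgroup_char_def
  proof (intro conjI ballI allI impI)
    show "psi' 1 = 1"
      using psi'_eq[OF unit_subgroup_mod_one[OF S], of 1 0] subgroup_char_one[OF psi] by simp
  next
    fix x y assume "x \<in> adjoin_mod m S g" "y \<in> adjoin_mod m S g"
    then obtain h i h' j where rep: "h \<in> S" "[x = h * g ^ i] (mod m)" "h' \<in> S" "[y = h' * g ^ j] (mod m)"
      unfolding mem_adjoin_mod_iff by blast
    have "[x * y = (h * h') * g ^ (i + j)] (mod m)"
      using cong_mult[OF rep(2,4)] by (simp add: power_add ac_simps)
    then have "psi' (x * y) = psi (h * h') * w ^ (i + j)"
      by (rule psi'_eq[OF unit_subgroup_mod_mult[OF S rep(1,3)]])
    then show "psi' (x * y) = psi' x * psi' y"
      using psi'_eq[OF rep(1,2)] psi'_eq[OF rep(3,4)] subgroup_char_mult[OF psi rep(1,3)]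
      by (simp add: power_add ac_simps)
  next
    fix x y assume "x \<in> adjoin_mod m S g" and yx: "[y = x] (mod m)"
    then obtain h i where "h \<in> S" "[x = h * g ^ i] (mod m)" unfolding mem_adjoin_mod_iff by blast
    then show "psi' y = psi' x" using psi'_eq cong_trans[OF yx] by metis
  qed
  moreover have "psi' x = psi x" if "x \<in> S" for x
    using psi'_eq[OF that, of x 0] by simp
  moreover have "psi' g = w"
    using psi'_eq[OF unit_subgroup_mod_one[OF S], of g 1] subgroup_char_one[OF psi] by simp
  ultimately show ?thesis by (rule that)
qed

lemma dirichlet_char_of_total_subgroup_char:
  assumes m: "m > 0" and S: "unit_subgroup_mod m S" and psi: "subgroup_char m S psi"
    and total: "\<And>x. coprime x m \<Longrightarrow> x \<in> S"
  shows "dirichlet_char m (\<lambda>x. if coprime x m then psi x else 0)"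
  unfolding dirichlet_char_def
proof (intro conjI allI)
  fix n
  have "[n + m = n] (mod m)" by (simp add: cong_def)
  moreover have "coprime (n + m) m \<longleftrightarrow> coprime n m" by (simp add: coprime_iff_gcd_eq_1)
  ultimately show "(if coprime (n + m) m then psi (n + m) else 0) = (if coprime n m then psi n else 0)"
    using subgroup_char_cong[OF psi total[of n], of "n + m"] by simp
next
  fix a b
  show "(if coprime (a * b) m then psi (a * b) else 0) =
        (if coprime a m then psi a else 0) * (if coprime b m then psi b else 0)"
    using subgroup_char_mult[OF psi total total] by simp
next
  show "(if coprime 1 m then psi 1 else 0) = 1" using subgroup_char_one[OF psi] by simp
next
  fix n
  show "((if coprime n m then psi n else 0) = 0) = (\<not> coprime n m)"
    using subgroup_char_nonzero[OF m S psi total] by simp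
qed

lemma subgroup_char_extends_to_dirichlet_char:
  assumes m: "m > 0" and S: "unit_subgroup_mod m S" and psi: "subgroup_char m S psi"
  shows "\<exists>chi. dirichlet_char m chi \<and> (\<forall>x\<in>S. chi x = psi x)"
  using S psi
proof (induction "card ({x \<in> {0..<m}. coprime x m} - S)" arbitrary: S psi rule: less_induct)
  case less
  define U where "U = {x \<in> {0..<m}. coprime x m}"
  show ?case
  proof (cases "U \<subseteq> S")
    case True
    have "x \<in> S" if "coprime x m" for x
    proof -
      have "x mod m \<in> S" using True m that by (auto simp: U_def)
      then show ?thesis using unit_subgroup_mod_cong[OF less.prems(1)] by (simp add: cong_def)
    qed
    then have "dirichlet_char m (\<lambda>x. if coprime x m then psi x else 0)"
      by (rule dirichlet_char_of_total_subgroup_char[OF m less.prems])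
    moreover have "\<forall>x\<in>S. (if coprime x m then psi x else 0) = psi x"
      using unit_subgroup_mod_coprime[OF less.prems(1)] by simp
    ultimately show ?thesis by blast
  next
    case False
    then obtain g where g: "g \<in> U" "g \<notin> S" by blast
    then have "coprime g m" by (simp add: U_def)
    obtain r where r: "r > 0" "g ^ r \<in> S" "\<And>k. g ^ k \<in> S \<Longrightarrow> r dvd k"
      using relative_order_exists[OF m less.prems(1) \<open>coprime g m\<close>] by blast
    obtain w where w: "psi (g ^ r) = w ^ r"
      by (rule exists_complex_root[of r]) (use r(1) in simp_all)
    obtain psi' where psi': "subgroup_char m (adjoin_mod m S g) psi'"
        "\<And>x. x \<in> S \<Longrightarrow> psi' x = psi x" "psi' g = w"
      using subgroup_char_extend[OF m less.prems(1,2) \<open>coprime g m\<close> r(2,3) w[symmetric]] by blast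
    have S': "unit_subgroup_mod m (adjoin_mod m S g)" "S \<subseteq> adjoin_mod m S g" "g \<in> adjoin_mod m S g"
      using unit_subgroup_mod_adjoin[OF less.prems(1) \<open>coprime g m\<close>] by blast+
    have "U - adjoin_mod m S g \<subset> U - S" using S'(2,3) g by blast
    moreover have "finite (U - S)" unfolding U_def by (rule finite_subset[of _ "{0..<m}"]) auto
    ultimately have "card (U - adjoin_mod m S g) < card (U - S)" by (rule psubset_card_mono[rotated])
    then obtain chi where chi: "dirichlet_char m chi" "\<forall>x\<in>adjoin_mod m S g. chi x = psi' x"
      using less.hyps[OF _ S'(1) psi'(1)] unfolding U_def by blast
    have "\<forall>x\<in>S. chi x = psi x" using chi(2) psi'(2) S'(2) by auto
    with chi(1) show ?thesis by blast
  qed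
qed

lemma exists_dirichlet_char_neq_1:
  assumes m: "m > 0" and x: "coprime x m" "\<not> [x = 1] (mod m)"
  obtains chi where "dirichlet_char m chi" "chi x \<noteq> 1"
proof -
  define S where "S = {y. [y = 1] (mod m)}"
  have S: "unit_subgroup_mod m S"
    unfolding unit_subgroup_mod_def S_def
  proof (intro conjI ballI allI impI; simp)
    show "[a * b = 1] (mod m)" if "[a = 1] (mod m)" "[b = 1] (mod m)" for a b
      using cong_mult[OF that] by simp
    show "[b = 1] (mod m)" if "[a = 1] (mod m)" "[b = a] (mod m)" for a b
      using cong_trans[OF that(2,1)] .
    show "coprime a m" if "[a = 1] (mod m)" for a
      using that by (rule coprime_if_cong_1)
  qed
  have trivial: "subgroup_char m S (\<lambda>_. 1)" by (simp add: subgroup_char_def)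
  obtain r where r: "r > 0" "x ^ r \<in> S" "\<And>k. x ^ k \<in> S \<Longrightarrow> r dvd k"
    using relative_order_exists[OF m S x(1)] by blast
  have "r \<noteq> 1" using r(2) x(2) by (auto simp: S_def)
  define w where "w = exp (2 * of_real pi * \<i> * of_nat 1 / of_nat r)"
  have w: "w ^ r = 1" "w \<noteq> 1"
    using complex_root_unity[of r 1] complex_root_unity_eq_1[of r 1] r(1) \<open>r \<noteq> 1\<close>
    by (simp_all add: w_def)
  obtain psi where psi: "subgroup_char m (adjoin_mod m S x) psi" "psi x = w"
    using subgroup_char_extend[OF m S trivial x(1) r(2,3), of w] w(1) by metis
  obtain chi where chi: "dirichlet_char m chi" "\<forall>y\<in>adjoin_mod m S x. chi y = psi y"
    using subgroup_char_extends_to_dirichlet_char[OF m unit_subgroup_mod_adjoin(1)[OF S x(1)] psi(1)]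
    by blast
  have "chi x = w" using chi(2) psi(2) unit_subgroup_mod_adjoin(3)[OF S x(1)] by simp
  with chi(1) w(2) show ?thesis using that by blast
qed

section \<open>Orthogonality of characters\<close>

lemma inj_on_mult_mod:
  fixes y m :: int
  assumes "coprime y m" "A \<subseteq> {0..<m}"
  shows "inj_on (\<lambda>x. y * x mod m) A"
proof (rule inj_onI)
  fix a b assume "a \<in> A" "b \<in> A" "y * a mod m = y * b mod m"
  then have "[a = b] (mod m)" using cong_mult_lcancel[OF assms(1)] by (simp add: cong_def)
  moreover have "a \<in> {0..<m}" "b \<in> {0..<m}" using \<open>a \<in> A\<close> \<open>b \<in> A\<close> assms(2) by auto
  ultimately show "a = b" by (auto intro: cong_less_imp_eq_int)
qed

lemma sum_eq_0_if_twisted_invariant: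
  fixes f :: "'a \<Rightarrow> 'b::field"
  assumes "finite A" "s ` A \<subseteq> A" "inj_on s A" "\<And>x. x \<in> A \<Longrightarrow> f (s x) = c * f x" "c \<noteq> 1"
  shows "sum f A = 0"
proof -
  have "sum f A = sum f (s ` A)" using endo_inj_surj[OF assms(1-3)] by simp
  also have "\<dots> = c * sum f A"
    using assms(3,4) by (simp add: sum.reindex sum_distrib_left)
  finally show ?thesis using assms(5) by (metis mult_cancel_right2)
qed

lemma sum_dirichlet_chars_eq_0:
  assumes m: "m > 0" and x: "coprime x m" "\<not> [x = 1] (mod m)"
  shows "(\<Sum>chi | dirichlet_char m chi. chi x) = 0"
proof -
  define X where "X = {chi. dirichlet_char m chi}"
  obtain chi0 where chi0: "dirichlet_char m chi0" "chi0 x \<noteq> 1"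
    using exists_dirichlet_char_neq_1[OF m x] .
  have "(\<Sum>chi\<in>X. chi x) = 0"
  proof (rule sum_eq_0_if_twisted_invariant)
    show "finite X" using finite_dirichlet_chars[OF m] by (simp add: X_def)
    show "(\<lambda>chi y. chi0 y * chi y) ` X \<subseteq> X"
      using dirichlet_char_times[OF chi0(1)] by (auto simp: X_def)
    show "inj_on (\<lambda>chi y. chi0 y * chi y) X"
    proof (rule inj_onI)
      fix chi chi' assume "chi \<in> X" "chi' \<in> X" and eq: "(\<lambda>y. chi0 y * chi y) = (\<lambda>y. chi0 y * chi' y)"
      show "chi = chi'"
      proof (rule dirichlet_char_eqI)
        fix y assume "coprime y m"
        then show "chi y = chi' y"
          using fun_cong[OF eq, of y] dirichlet_char_eq_0_iff[OF chi0(1), of y] by simp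
      qed (use \<open>chi \<in> X\<close> \<open>chi' \<in> X\<close> in \<open>simp_all add: X_def\<close>)
    qed
  qed (use chi0(2) in simp_all)
  then show ?thesis by (simp add: X_def)
qed

lemma sum_dirichlet_chars:
  assumes m: "m > 0"
  shows "(\<Sum>chi | dirichlet_char m chi. chi x) =
         (if [x = 1] (mod m) then of_nat (card {chi. dirichlet_char m chi}) else 0)"
proof -
  define X where "X = {chi. dirichlet_char m chi}"
  consider "[x = 1] (mod m)" | "\<not> [x = 1] (mod m)" "coprime x m" | "\<not> coprime x m"
    using coprime_if_cong_1 by blast
  then show ?thesis
  proof cases
    case 1
    then have "chi x = 1" if "chi \<in> X" for chi
      using that dirichlet_char_cong dirichlet_char_one by (metis X_def mem_Collect_eq)
    then have "(\<Sum>chi\<in>X. chi x) = (\<Sum>chi\<in>X. 1)" by (intro sum.cong) auto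
    then show ?thesis using 1 by (simp add: X_def)
  next
    case 2
    then show ?thesis using sum_dirichlet_chars_eq_0[OF m 2(2,1)] by simp
  next
    case 3
    then have "\<not> [x = 1] (mod m)" using coprime_if_cong_1 by blast
    moreover have "(\<Sum>chi | dirichlet_char m chi. chi x) = 0"
      using 3 dirichlet_char_eq_0_iff by (intro sum.neutral) auto
    ultimately show ?thesis by simp
  qed
qed

lemma card_coprime_residues:
  assumes "m > (0::int)"
  shows "card {x \<in> {0..<m}. coprime x m} = totient (nat m)"
proof (cases "m = 1")
  case True
  then have "{x \<in> {0..<m}. coprime x m} = {0}" by auto
  then show ?thesis using True by simp
next
  case False
  have "{x \<in> {0..<m}. coprime x m} = int ` totatives (nat m)"
  proof (intro equalityI subsetI)
    fix x assume x: "x \<in> {x \<in> {0..<m}. coprime x m}"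
    then have "x > 0" using False by (cases "x = 0") auto
    moreover have "coprime (nat x) (nat m)"
      using x assms \<open>x > 0\<close> coprime_int_iff[of "nat x" "nat m"] by simp
    ultimately have "nat x \<in> totatives (nat m)" using x by (auto simp: in_totatives_iff intro: nat_mono)
    then show "x \<in> int ` totatives (nat m)" using \<open>x > 0\<close> by (intro image_eqI[of _ _ "nat x"]) simp_all
  next
    fix x assume "x \<in> int ` totatives (nat m)"
    then obtain k where "k \<in> totatives (nat m)" "x = int k" by blast
    moreover have "nat m > 1" using assms False by simp
    ultimately show "x \<in> {x \<in> {0..<m}. coprime x m}"
      using assms totatives_less[of k "nat m"] coprime_int_iff[of k "nat m"]
      by (auto simp: in_totatives_iff)
  qed
  then show ?thesis by (simp add: card_image totient_def)
qed

lemma sum_dirichlet_char_coprime_residues: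
  assumes m: "m > 0" and chi: "dirichlet_char m chi"
  shows "(\<Sum>x\<in>{x \<in> {0..<m}. coprime x m}. chi x) =
         (if chi = (\<lambda>x. if coprime x m then 1 else 0) then of_nat (totient (nat m)) else 0)"
proof -
  define R where "R = {x \<in> {0..<m}. coprime x m}"
  have finR: "finite R" unfolding R_def by (rule finite_subset[of _ "{0..<m}"]) auto
  show ?thesis
  proof (cases "chi = (\<lambda>x. if coprime x m then 1 else 0)")
    case True
    then have "(\<Sum>x\<in>R. chi x) = of_nat (card R)" by (simp add: R_def)
    then show ?thesis using True card_coprime_residues[OF m] by (simp add: R_def)
  next
    case False
    then obtain y where y: "coprime y m" "chi y \<noteq> 1"
      using dirichlet_char_eqI[OF chi dirichlet_char_principal] by force
    have "(\<Sum>x\<in>R. chi x) = 0"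
    proof (rule sum_eq_0_if_twisted_invariant)
      show "(\<lambda>x. y * x mod m) ` R \<subseteq> R"
        using y(1) m by (auto simp: R_def)
      show "inj_on (\<lambda>x. y * x mod m) R" using y(1) by (rule inj_on_mult_mod) (auto simp: R_def)
      show "chi (y * x mod m) = chi y * chi x" for x
        using dirichlet_char_mod[OF chi] dirichlet_char_mult[OF chi] by simp
    qed (use finR y(2) in simp_all)
    then show ?thesis using False by (simp add: R_def)
  qed
qed

theorem card_dirichlet_chars:
  assumes m: "m > 0"
  shows "card {chi. dirichlet_char m chi} = totient (nat m)"
proof -
  define X where "X = {chi. dirichlet_char m chi}"
  define R where "R = {x \<in> {0..<m}. coprime x m}"
  have finR: "finite R" unfolding R_def by (rule finite_subset[of _ "{0..<m}"]) auto
  have "1 mod m \<in> R" using m by (simp add: R_def)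
  have "[x = 1] (mod m) \<longleftrightarrow> x = 1 mod m" if "x \<in> R" for x
    using that by (auto simp: R_def cong_def)
  then have "(\<Sum>x\<in>R. \<Sum>chi\<in>X. chi x) = (\<Sum>x\<in>R. if x = 1 mod m then of_nat (card X) else 0)"
    using sum_dirichlet_chars[OF m] by (intro sum.cong) (simp_all add: X_def)
  also have "\<dots> = of_nat (card X)" using finR \<open>1 mod m \<in> R\<close> by (simp add: sum.delta)
  finally have "of_nat (card X) = (\<Sum>chi\<in>X. \<Sum>x\<in>R. chi x)" by (simp add: sum.swap[of _ R])
  also have "\<dots> = (\<Sum>chi\<in>X. if chi = (\<lambda>x. if coprime x m then 1 else 0) then of_nat (totient (nat m)) else 0)"
    using sum_dirichlet_char_coprime_residues[OF m] by (intro sum.cong) (simp_all add: X_def R_def)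
  also have "\<dots> = of_nat (totient (nat m))"
    using finite_dirichlet_chars[OF m] dirichlet_char_principal by (simp add: X_def sum.delta')
  finally show ?thesis by (simp add: X_def)
qed

section \<open>The characters in G1(q)\<close>

lemma e_add: "e (x + y) = e x * e y"
  unfolding e_def by (simp add: distrib_left exp_add)

lemma e_of_int: "e (of_int k) = 1"
  unfolding e_def using exp_2pi_1_int[of k] by (simp add: ac_simps)

lemma norm_e: "norm (e x) = 1"
  unfolding e_def by simp

definition G1_value :: "nat \<Rightarrow> int \<Rightarrow> complex" where
  "G1_value q x = e (of_int (x - 1) / real q ^ 2)"

definition one_mod_reps :: "nat \<Rightarrow> int set" where
  "one_mod_reps q = {x \<in> {0..<int q ^ 2}. [x = 1] (mod int q)}"

lemma G1_value_cong:
  assumes "q > 0" "[x = y] (mod int q ^ 2)"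
  shows "G1_value q x = G1_value q y"
proof -
  obtain k where k: "x = y + int q ^ 2 * k" using assms(2) cong_iff_lin cong_sym by blast
  have "of_int (x - 1) / real q ^ 2 = of_int (y - 1) / real q ^ 2 + of_int k"
    using assms(1) by (simp add: k field_simps)
  then show ?thesis unfolding G1_value_def by (simp add: e_add e_of_int)
qed

(* x y - 1 = (x - 1) + (y - 1) + (x - 1) (y - 1), and the last term is divisible by q^2. *)
lemma G1_value_mult:
  assumes "q > 0" "[x = 1] (mod int q)" "[y = 1] (mod int q)"
  shows "G1_value q (x * y) = G1_value q x * G1_value q y"
proof -
  obtain a b where "x - 1 = int q * a" "y - 1 = int q * b"
    using assms(2,3) by (metis cong_iff_dvd_diff cong_sym dvdE)
  then have "x * y - 1 = (x - 1) + (y - 1) + int q ^ 2 * (a * b)"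
    by (simp add: algebra_simps power2_eq_square)
  then have "real_of_int (x * y - 1)
             = of_int (x - 1) + of_int (y - 1) + real q ^ 2 * of_int (a * b)"
    by (metis of_int_add of_int_mult of_int_power of_int_of_nat_eq)
  then have "of_int (x * y - 1) / real q ^ 2
             = of_int (x - 1) / real q ^ 2 + of_int (y - 1) / real q ^ 2 + of_int (a * b)"
    using assms(1) by (simp only: add_divide_distrib) simp
  then show ?thesis unfolding G1_value_def by (simp only: e_add e_of_int mult_1_right)
qed

lemma finite_one_mod_reps: "finite (one_mod_reps q)"
  unfolding one_mod_reps_def by (rule finite_subset[of _ "{0..<int q ^ 2}"]) auto

lemma one_mod_reps_cong_1: "x \<in> one_mod_reps q \<Longrightarrow> [x = 1] (mod int q)"
  by (simp add: one_mod_reps_def)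

lemma card_one_mod_reps:
  assumes "q > 0"
  shows "card (one_mod_reps q) = q"
proof -
  define r where "r = 1 mod int q"
  have r: "0 \<le> r" "r < int q" using assms by (simp_all add: r_def)
  have "one_mod_reps q = (\<lambda>k. int q * k + r) ` {0..<int q}"
  proof (intro equalityI subsetI)
    fix x assume "x \<in> one_mod_reps q"
    then have x: "x mod int q = r" "0 \<le> x" "x < int q * int q"
      by (simp_all add: one_mod_reps_def cong_def power2_eq_square r_def)
    have "x = int q * (x div int q) + r" using x(1) by (metis mult_div_mod_eq)
    moreover have "0 \<le> x div int q" using x(2) assms by (simp add: pos_imp_zdiv_nonneg_iff)
    moreover have "x div int q < int q"
    proof -
      have "int q * (x div int q) \<le> x"
        using mult_div_mod_eq[of "int q" x] pos_mod_sign[of "int q" x] assms by linarith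
      then have "int q * (x div int q) < int q * int q" using x(3) by linarith
      then show ?thesis using assms by simp
    qed
    ultimately show "x \<in> (\<lambda>k. int q * k + r) ` {0..<int q}" by (intro image_eqI) auto
  next
    fix x assume "x \<in> (\<lambda>k. int q * k + r) ` {0..<int q}"
    then obtain k where k: "0 \<le> k" "k < int q" "x = int q * k + r" by auto
    have "int q * k \<le> int q * (int q - 1)" using k by (intro mult_left_mono) auto
    then have "x < int q ^ 2" using k(3) r(2) by (simp add: power2_eq_square algebra_simps)
    moreover have "[x = 1] (mod int q)" by (simp add: k(3) r_def cong_def)
    ultimately show "x \<in> one_mod_reps q" using k r by (simp add: one_mod_reps_def)
  qed
  moreover have "inj_on (\<lambda>k. int q * k + r) {0..<int q}"
    using assms by (intro inj_onI) simp
  ultimately show ?thesis by (simp add: card_image)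
qed

lemma G1_dirichlet_char: "\<xi> \<in> G1 q \<Longrightarrow> dirichlet_char (int q ^ 2) \<xi>"
  by (simp add: G1_def)

lemma mult_mod_mem_one_mod_reps:
  assumes q: "q > 0" and "h0 \<in> one_mod_reps q" "h \<in> one_mod_reps q"
  shows "h0 * h mod int q ^ 2 \<in> one_mod_reps q"
proof -
  have "[h0 * h = 1 * 1] (mod int q)"
    using cong_mult one_mod_reps_cong_1 assms(2,3) by blast
  moreover have "[h0 * h mod int q ^ 2 = h0 * h] (mod int q)"
    by (rule cong_dvd_modulus[of _ _ "int q ^ 2"]) (simp_all add: cong_def)
  ultimately show ?thesis
    using q by (auto simp: one_mod_reps_def intro: cong_trans)
qed

lemma mem_G1_iff:
  assumes q: "q > 0" and chi: "dirichlet_char (int q ^ 2) chi"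
  shows "chi \<in> G1 q \<longleftrightarrow> (\<forall>h\<in>one_mod_reps q. chi h = G1_value q h)"
proof
  assume "chi \<in> G1 q"
  then show "\<forall>h\<in>one_mod_reps q. chi h = G1_value q h"
    by (simp add: G1_def G1_value_def one_mod_reps_def)
next
  assume reps: "\<forall>h\<in>one_mod_reps q. chi h = G1_value q h"
  have "chi x = G1_value q x" if x: "[x = 1] (mod int q)" for x
  proof -
    have "[x mod int q ^ 2 = x] (mod int q)"
      by (rule cong_dvd_modulus[of _ _ "int q ^ 2"]) (simp_all add: cong_def)
    then have "x mod int q ^ 2 \<in> one_mod_reps q"
      using q x by (auto simp: one_mod_reps_def intro: cong_trans)
    then have "chi (x mod int q ^ 2) = G1_value q (x mod int q ^ 2)" using reps by blast
    then show ?thesis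
      using dirichlet_char_mod[OF chi] G1_value_cong[OF q, of "x mod int q ^ 2" x] by (simp add: cong_def)
  qed
  then show "chi \<in> G1 q" using chi by (simp add: G1_def G1_value_def)
qed

lemma sum_one_mod_reps_G1_value:
  assumes q: "q > 0" and chi: "dirichlet_char (int q ^ 2) chi"
  shows "(\<Sum>h\<in>one_mod_reps q. chi h * cnj (G1_value q h)) = (if chi \<in> G1 q then of_nat q else 0)"
proof (cases "chi \<in> G1 q")
  case True
  then have "chi h * cnj (G1_value q h) = 1" if "h \<in> one_mod_reps q" for h
    using that mem_G1_iff[OF q chi] cnj_mult_self_eq_1[OF norm_e] by (simp add: G1_value_def mult.commute)
  then have "(\<Sum>h\<in>one_mod_reps q. chi h * cnj (G1_value q h)) = of_nat (card (one_mod_reps q))"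
    by simp
  then show ?thesis using True card_one_mod_reps[OF q] by simp
next
  case False
  define m where "m = int q ^ 2"
  obtain h0 where h0: "h0 \<in> one_mod_reps q" "chi h0 \<noteq> G1_value q h0"
    using False mem_G1_iff[OF q chi] by blast
  have h0_1: "[h0 = 1] (mod int q)" using one_mod_reps_cong_1[OF h0(1)] .
  have "(\<Sum>h\<in>one_mod_reps q. chi h * cnj (G1_value q h)) = 0"
  proof (rule sum_eq_0_if_twisted_invariant[where s = "\<lambda>h. h0 * h mod m"])
    show "(\<lambda>h. h0 * h mod m) ` one_mod_reps q \<subseteq> one_mod_reps q"
      using mult_mod_mem_one_mod_reps[OF q h0(1)] by (auto simp: m_def)
    have "coprime h0 m" using coprime_if_cong_1[OF h0_1] by (simp add: m_def)
    then show "inj_on (\<lambda>h. h0 * h mod m) (one_mod_reps q)"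
      by (rule inj_on_mult_mod) (auto simp: one_mod_reps_def m_def)
    fix h assume h: "h \<in> one_mod_reps q"
    have "G1_value q (h0 * h mod m) = G1_value q h0 * G1_value q h"
      using G1_value_cong[OF q, of "h0 * h mod m" "h0 * h"] G1_value_mult[OF q h0_1 one_mod_reps_cong_1[OF h]]
      by (simp add: m_def cong_def)
    moreover have "chi (h0 * h mod m) = chi h0 * chi h"
      using dirichlet_char_mod[OF chi] dirichlet_char_mult[OF chi] by (simp add: m_def)
    ultimately show "chi (h0 * h mod m) * cnj (G1_value q (h0 * h mod m)) =
        chi h0 * cnj (G1_value q h0) * (chi h * cnj (G1_value q h))" by simp
  next
    have "norm (G1_value q h0) = 1" by (simp add: G1_value_def norm_e)
    then show "chi h0 * cnj (G1_value q h0) \<noteq> 1"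
      using h0(2) cnj_mult_self_eq_1 by (metis mult.assoc mult.commute mult_1_right)
  qed (rule finite_one_mod_reps)
  then show ?thesis using False by simp
qed

(* Detecting G1 by the sum over one_mod_reps and summing over all characters modulo q^2 turns
   a sum over G1 into a sum over the solutions h of h y = 1 (mod q^2). *)
lemma of_nat_mult_sum_G1:
  assumes q: "q > 0"
  shows "of_nat q * (\<Sum>\<xi>\<in>G1 q. \<xi> y) =
         (\<Sum>h\<in>one_mod_reps q. cnj (G1_value q h) *
            (if [h * y = 1] (mod int q ^ 2) then of_nat (totient (q ^ 2)) else 0))"
proof -
  define X where "X = {chi. dirichlet_char (int q ^ 2) chi}"
  have m: "int q ^ 2 > 0" using q by simp
  have "G1 q \<subseteq> X" by (auto simp: G1_def X_def)
  then have "of_nat q * (\<Sum>\<xi>\<in>G1 q. \<xi> y) = (\<Sum>chi\<in>X. if chi \<in> G1 q then of_nat q * chi y else 0)"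
    using sum.inter_restrict[OF finite_dirichlet_chars[OF m], of "\<lambda>chi. of_nat q * chi y" "G1 q"]
    by (simp add: Int_absorb1 Int_absorb2 sum_distrib_left X_def)
  also have "\<dots> = (\<Sum>chi\<in>X. (\<Sum>h\<in>one_mod_reps q. chi h * cnj (G1_value q h)) * chi y)"
    using sum_one_mod_reps_G1_value[OF q] by (intro sum.cong) (auto simp: X_def)
  also have "\<dots> = (\<Sum>chi\<in>X. \<Sum>h\<in>one_mod_reps q. cnj (G1_value q h) * chi (h * y))"
  proof (rule sum.cong)
    fix chi assume "chi \<in> X"
    then have chi: "dirichlet_char (int q ^ 2) chi" by (simp add: X_def)
    show "(\<Sum>h\<in>one_mod_reps q. chi h * cnj (G1_value q h)) * chi y =
        (\<Sum>h\<in>one_mod_reps q. cnj (G1_value q h) * chi (h * y))"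
      unfolding sum_distrib_right by (simp add: dirichlet_char_mult[OF chi] ac_simps)
  qed simp
  also have "\<dots> = (\<Sum>h\<in>one_mod_reps q. cnj (G1_value q h) * (\<Sum>chi\<in>X. chi (h * y)))"
    by (simp add: sum.swap[of _ X] sum_distrib_left)
  also have "\<dots> = (\<Sum>h\<in>one_mod_reps q. cnj (G1_value q h) *
      (if [h * y = 1] (mod int q ^ 2) then of_nat (card X) else 0))"
    unfolding X_def using sum_dirichlet_chars[OF m] by simp
  also have "card X = totient (q ^ 2)"
    using card_dirichlet_chars[OF m] by (simp add: X_def nat_power_eq)
  finally show ?thesis .
qed

theorem card_G1:
  assumes q: "q > 0"
  shows "card (G1 q) = totient q"
proof -
  have "(\<Sum>\<xi>\<in>G1 q. \<xi> 1) = (\<Sum>\<xi>\<in>G1 q. 1)"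
    by (intro sum.cong) (simp_all add: dirichlet_char_one[OF G1_dirichlet_char])
  then have "of_nat (q * card (G1 q)) =
      (\<Sum>h\<in>one_mod_reps q. cnj (G1_value q h) *
         (if [h = 1] (mod int q ^ 2) then of_nat (totient (q ^ 2)) else 0) :: complex)"
    using of_nat_mult_sum_G1[OF q, of 1] by simp
  also have "\<dots> = (\<Sum>h\<in>one_mod_reps q. if h = 1 mod int q ^ 2 then of_nat (totient (q ^ 2)) else 0)"
  proof (rule sum.cong)
    fix h assume h: "h \<in> one_mod_reps q"
    then have "[h = 1] (mod int q ^ 2) \<longleftrightarrow> h = 1 mod int q ^ 2"
      by (auto simp: one_mod_reps_def cong_def)
    moreover have "G1_value q (1 mod int q ^ 2) = 1"
      using G1_value_cong[OF q, of "1 mod int q ^ 2" 1] by (simp add: cong_def G1_value_def e_def)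
    ultimately show "cnj (G1_value q h) * (if [h = 1] (mod int q ^ 2) then of_nat (totient (q ^ 2)) else 0) =
        (if h = 1 mod int q ^ 2 then of_nat (totient (q ^ 2)) else 0)" by auto
  qed simp
  also have "\<dots> = of_nat (totient (q ^ 2))"
  proof -
    have "1 mod int q ^ 2 \<in> one_mod_reps q"
      using q by (simp add: one_mod_reps_def cong_def) (metis mod_mod_cancel dvd_triv_left power2_eq_square)
    then show ?thesis using finite_one_mod_reps by (simp add: sum.delta)
  qed
  finally have "q * card (G1 q) = q * totient q" by (simp only: of_nat_eq_iff totient_power) simp
  then show ?thesis using q by simp
qed

lemma sum_G1_eq_0:
  assumes q: "q > 0" and y: "\<not> [y = 1] (mod int q)"
  shows "(\<Sum>\<xi>\<in>G1 q. \<xi> y) = 0"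
proof -
  have "\<not> [h * y = 1] (mod int q ^ 2)" if "h \<in> one_mod_reps q" for h
  proof
    assume "[h * y = 1] (mod int q ^ 2)"
    then have "[h * y = 1] (mod int q)" by (rule cong_dvd_modulus) simp
    moreover have "[h * y = 1 * y] (mod int q)" using cong_mult[OF one_mod_reps_cong_1[OF that] cong_refl] .
    ultimately show False using y by (metis cong_sym cong_trans mult_1)
  qed
  then have "of_nat q * (\<Sum>\<xi>\<in>G1 q. \<xi> y) = 0" by (simp add: of_nat_mult_sum_G1[OF q])
  then show ?thesis using q by simp
qed

theorem sum_G1_mult_cnj_eq_0:
  assumes q: "q > 0" and k: "coprime k (int q)" and nk: "\<not> [n = k] (mod int q)"
  shows "(\<Sum>\<xi>\<in>G1 q. \<xi> n * cnj (\<xi> k)) = 0"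
proof -
  obtain k' where k': "[k * k' = 1] (mod int q ^ 2)"
    using cong_solve_coprime_int[of k "int q ^ 2"] k by auto
  have "\<xi> n * cnj (\<xi> k) = \<xi> (n * k')" if "\<xi> \<in> G1 q" for \<xi>
  proof -
    have chi: "dirichlet_char (int q ^ 2) \<xi>" using G1_dirichlet_char[OF that] .
    have "\<xi> k * \<xi> k' = 1"
      using dirichlet_char_cong[OF chi k'] by (simp add: dirichlet_char_mult[OF chi] dirichlet_char_one[OF chi])
    moreover have "cnj (\<xi> k) * \<xi> k = 1"
      using cnj_mult_self_eq_1 norm_dirichlet_char[OF chi] q k by simp
    ultimately have "cnj (\<xi> k) = \<xi> k'" by (metis mult.assoc mult_1_left mult_1_right)
    then show ?thesis by (simp add: dirichlet_char_mult[OF chi])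
  qed
  moreover have "\<not> [n * k' = 1] (mod int q)"
  proof
    assume "[n * k' = 1] (mod int q)"
    then have "[n * k' * k = 1 * k] (mod int q)" by (rule cong_mult) simp
    moreover have "[k * k' = 1] (mod int q)" using k' by (rule cong_dvd_modulus) simp
    then have "[n * (k * k') = n * 1] (mod int q)" by (rule cong_mult[OF cong_refl])
    ultimately have "[n = k] (mod int q)"
      by (metis cong_sym cong_trans mult.assoc mult.commute mult_1_left mult_1_right)
    then show False using nk by simp
  qed
  ultimately show ?thesis using sum_G1_eq_0[OF q] by simp
qed

section \<open>The mean square estimate\<close>

lemma of_real_sum_norm_sum_squared:
  fixes a :: "'a \<Rightarrow> complex" and X :: "('a \<Rightarrow> complex) set"
  shows "of_real (\<Sum>\<xi>\<in>X. (cmod (\<Sum>n\<in>I. a n * \<xi> n))\<^sup>2) =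
         (\<Sum>n\<in>I. \<Sum>k\<in>I. a n * cnj (a k) * (\<Sum>\<xi>\<in>X. \<xi> n * cnj (\<xi> k)))"
proof -
  have "of_real (\<Sum>\<xi>\<in>X. (cmod (\<Sum>n\<in>I. a n * \<xi> n))\<^sup>2) =
        (\<Sum>\<xi>\<in>X. \<Sum>n\<in>I. \<Sum>k\<in>I. a n * cnj (a k) * (\<xi> n * cnj (\<xi> k)))"
    unfolding of_real_sum complex_norm_square by (simp add: cnj_sum sum_product ac_simps)
  also have "\<dots> = (\<Sum>n\<in>I. \<Sum>k\<in>I. \<Sum>\<xi>\<in>X. a n * cnj (a k) * (\<xi> n * cnj (\<xi> k)))"
    by (subst sum.swap) (rule sum.cong[OF refl sum.swap])
  finally show ?thesis by (simp add: sum_distrib_left)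
qed

lemma sum_sum_related_products_le:
  fixes x :: "'a \<Rightarrow> real"
  assumes I: "finite I" and sym: "\<And>n k. R n k \<Longrightarrow> R k n" and RP: "\<And>n k. R n k \<Longrightarrow> P n"
    and deg: "\<And>n. n \<in> I \<Longrightarrow> card {k \<in> I. R n k} \<le> K"
  shows "(\<Sum>n\<in>I. \<Sum>k\<in>I. if R n k then x n * x k else 0) \<le> real K * (\<Sum>n\<in>{n \<in> I. P n}. (x n)\<^sup>2)"
proof -
  define W where "W = (\<Sum>n\<in>I. \<Sum>k\<in>I. if R n k then (x n)\<^sup>2 else 0)"
  have "x n * x k \<le> ((x n)\<^sup>2 + (x k)\<^sup>2) / 2" for n k
    using sum_squares_bound[of "x n" "x k"] by (simp add: power2_eq_square)
  then have "(\<Sum>n\<in>I. \<Sum>k\<in>I. if R n k then x n * x k else 0)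
      \<le> (\<Sum>n\<in>I. \<Sum>k\<in>I. ((if R n k then (x n)\<^sup>2 else 0) + (if R k n then (x k)\<^sup>2 else 0)) / 2)"
    using sym by (intro sum_mono) auto
  also have "\<dots> = (W + (\<Sum>n\<in>I. \<Sum>k\<in>I. if R k n then (x k)\<^sup>2 else 0)) / 2"
    by (simp add: W_def sum.distrib sum_divide_distrib add_divide_distrib)
  also have "(\<Sum>n\<in>I. \<Sum>k\<in>I. if R k n then (x k)\<^sup>2 else 0) = W"
    unfolding W_def by (rule sum.swap)
  also have "(W + W) / 2 = W" by simp
  also have "W = (\<Sum>n\<in>I. real (card {k \<in> I. R n k}) * (x n)\<^sup>2)"
    unfolding W_def using I by (simp add: sum.inter_filter[symmetric])
  also have "\<dots> \<le> (\<Sum>n\<in>I. if P n then real K * (x n)\<^sup>2 else 0)"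
  proof (rule sum_mono)
    fix n assume "n \<in> I"
    show "real (card {k \<in> I. R n k}) * (x n)\<^sup>2 \<le> (if P n then real K * (x n)\<^sup>2 else 0)"
    proof (cases "P n")
      case False
      then have empty: "{k \<in> I. R n k} = {}" using RP by blast
      show ?thesis unfolding empty using False by simp
    qed (use deg[OF \<open>n \<in> I\<close>] in \<open>simp add: mult_right_mono\<close>)
  qed
  also have "\<dots> = real K * (\<Sum>n\<in>{n \<in> I. P n}. (x n)\<^sup>2)"
    using I by (simp add: sum.inter_filter sum_distrib_left if_distrib cong: if_cong)
  finally show ?thesis .
qed

lemma norm_quadratic_form_minus_diagonal_le:
  fixes a :: "'a \<Rightarrow> complex" and T :: "'a \<Rightarrow> 'a \<Rightarrow> complex"
  assumes I: "finite I" and c: "c \<ge> 0"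
    and diag: "\<And>n. n \<in> I \<Longrightarrow> T n n = (if P n then of_real c else 0)"
    and off: "\<And>n k. n \<in> I \<Longrightarrow> k \<in> I \<Longrightarrow> k \<noteq> n \<Longrightarrow> norm (T n k) \<le> (if R n k then c else 0)"
    and irrefl: "\<And>n. \<not> R n n" and sym: "\<And>n k. R n k \<Longrightarrow> R k n" and RP: "\<And>n k. R n k \<Longrightarrow> P n"
    and deg: "\<And>n. n \<in> I \<Longrightarrow> card {k \<in> I. R n k} \<le> K"
  shows "norm ((\<Sum>n\<in>I. \<Sum>k\<in>I. a n * cnj (a k) * T n k) - of_real (c * (\<Sum>n\<in>{n \<in> I. P n}. (cmod (a n))\<^sup>2)))
         \<le> c * real K * (\<Sum>n\<in>{n \<in> I. P n}. (cmod (a n))\<^sup>2)"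
proof -
  define D where "D = (\<Sum>n\<in>{n \<in> I. P n}. (cmod (a n))\<^sup>2)"
  define off_diag where "off_diag = (\<Sum>n\<in>I. \<Sum>k\<in>I - {n}. a n * cnj (a k) * T n k)"
  have "(\<Sum>n\<in>I. a n * cnj (a n) * T n n) = (\<Sum>n\<in>I. of_real (if P n then c * (cmod (a n))\<^sup>2 else 0))"
    using diag by (intro sum.cong) (simp_all add: complex_norm_square[symmetric])
  also have "\<dots> = of_real (c * D)"
    using I by (simp add: D_def sum.inter_filter sum_distrib_left if_distrib cong: if_cong)
  finally have "(\<Sum>n\<in>I. \<Sum>k\<in>I. a n * cnj (a k) * T n k) = of_real (c * D) + off_diag"
    using I by (simp add: off_diag_def sum.remove sum.distrib)
  then have "norm ((\<Sum>n\<in>I. \<Sum>k\<in>I. a n * cnj (a k) * T n k) - of_real (c * D)) = norm off_diag"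
    by simp
  also have "\<dots> \<le> (\<Sum>n\<in>I. \<Sum>k\<in>I - {n}. cmod (a n) * cmod (a k) * norm (T n k))"
    unfolding off_diag_def
    by (rule order.trans[OF norm_sum sum_mono], rule order.trans[OF norm_sum]) (simp add: norm_mult)
  also have "\<dots> \<le> (\<Sum>n\<in>I. \<Sum>k\<in>I - {n}. c * (if R n k then cmod (a n) * cmod (a k) else 0))"
  proof (intro sum_mono)
    fix n k assume "n \<in> I" "k \<in> I - {n}"
    then have "cmod (a n) * cmod (a k) * norm (T n k) \<le> cmod (a n) * cmod (a k) * (if R n k then c else 0)"
      using off by (intro mult_left_mono) auto
    then show "cmod (a n) * cmod (a k) * norm (T n k) \<le> c * (if R n k then cmod (a n) * cmod (a k) else 0)"
      by (cases "R n k") (simp_all add: mult.commute)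
  qed
  also have "\<dots> = c * (\<Sum>n\<in>I. \<Sum>k\<in>I. if R n k then cmod (a n) * cmod (a k) else 0)"
    using I irrefl by (simp add: sum_distrib_left sum.remove)
  also have "\<dots> \<le> c * (real K * D)"
    unfolding D_def using sum_sum_related_products_le[OF I sym RP deg] c by (rule mult_left_mono)
  finally show ?thesis by (simp add: D_def mult.assoc)
qed

lemma sum_G1_mult_cnj_diagonal:
  assumes q: "q > 0"
  shows "(\<Sum>\<xi>\<in>G1 q. \<xi> n * cnj (\<xi> n)) = (if coprime n (int q) then of_nat (totient q) else 0)"
proof (cases "coprime n (int q)")
  case True
  have "\<xi> n * cnj (\<xi> n) = 1" if "\<xi> \<in> G1 q" for \<xi>
    using cnj_mult_self_eq_1 norm_dirichlet_char[OF G1_dirichlet_char[OF that]] q True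
    by (simp add: mult.commute)
  then show ?thesis using True card_G1[OF q] by simp
next
  case False
  then show ?thesis using dirichlet_char_eq_0_iff[OF G1_dirichlet_char] by (simp add: sum.neutral)
qed

lemma norm_sum_G1_mult_cnj_le:
  assumes q: "q > 0"
  shows "norm (\<Sum>\<xi>\<in>G1 q. \<xi> n * cnj (\<xi> k)) \<le>
         (if coprime n (int q) \<and> coprime k (int q) \<and> [n = k] (mod int q) then real (totient q) else 0)"
proof (cases "coprime n (int q) \<and> coprime k (int q)")
  case True
  have "norm (\<Sum>\<xi>\<in>G1 q. \<xi> n * cnj (\<xi> k)) \<le> (\<Sum>\<xi>\<in>G1 q. 1)"
  proof (rule order.trans[OF norm_sum sum_mono])
    fix \<xi> assume "\<xi> \<in> G1 q"
    then show "norm (\<xi> n * cnj (\<xi> k)) \<le> 1"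
      using norm_dirichlet_char_le_1[OF G1_dirichlet_char] q
      by (simp add: norm_mult mult_le_one)
  qed
  then show ?thesis using True sum_G1_mult_cnj_eq_0[OF q] card_G1[OF q] by auto
next
  case False
  then have "\<xi> n * cnj (\<xi> k) = 0" if "\<xi> \<in> G1 q" for \<xi>
    using dirichlet_char_eq_0_iff[OF G1_dirichlet_char[OF that]] by auto
  then show ?thesis using False by (simp add: sum.neutral)
qed

lemma card_cong_in_interval_le:
  assumes q: "q > 0" and n: "n \<in> {M+1..M+int N}"
  shows "card {k \<in> {M+1..M+int N}. k \<noteq> n \<and> [n = k] (mod int q)} \<le> 2 * (N div q)"
proof -
  define K where "K = int (N div q)"
  have "{k \<in> {M+1..M+int N}. k \<noteq> n \<and> [n = k] (mod int q)} \<subseteq> (\<lambda>j. n + int q * j) ` ({-K..-1} \<union> {1..K})"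
  proof
    fix k assume k: "k \<in> {k \<in> {M+1..M+int N}. k \<noteq> n \<and> [n = k] (mod int q)}"
    then obtain j where j: "k = n + int q * j" using cong_iff_lin by blast
    have "j \<noteq> 0" using k j by auto
    have "\<bar>j\<bar> * int q \<le> int N" using k n j by (auto simp: abs_mult ac_simps)
    then have "(\<bar>j\<bar> * int q) div int q \<le> int N div int q" using q by (intro zdiv_mono1) auto
    then have "\<bar>j\<bar> \<le> K" using q by (simp add: K_def of_nat_div)
    then have "j \<in> {-K..-1} \<union> {1..K}" using \<open>j \<noteq> 0\<close> by auto
    then show "k \<in> (\<lambda>j. n + int q * j) ` ({-K..-1} \<union> {1..K})" using j by blast
  qed
  then have "card {k \<in> {M+1..M+int N}. k \<noteq> n \<and> [n = k] (mod int q)}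
      \<le> card ((\<lambda>j. n + int q * j) ` ({-K..-1} \<union> {1..K}))"
    by (rule card_mono[rotated]) simp
  also have "\<dots> \<le> card ({-K..-1} \<union> {1..K})" by (rule card_image_le) simp
  also have "\<dots> \<le> card {-K..-1} + card {1..K}" by (rule card_Un_le)
  finally show ?thesis by (simp add: K_def)
qed

lemma G1_mean_square_minus_diagonal_le:
  fixes a :: "int \<Rightarrow> complex" and M :: int and N q :: nat
  assumes q: "q > 0"
  defines "D \<equiv> (\<Sum>n\<in>{n\<in>{M+1..M+int N}. coprime n (int q)}. (cmod (a n))\<^sup>2)"
  shows "\<bar>(\<Sum>\<xi>\<in>G1 q. (cmod (\<Sum>n\<in>{M+1..M+int N}. a n * \<xi> n))\<^sup>2) - real (totient q) * D\<bar>
         \<le> real (totient q) * real (2 * (N div q)) * D"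
proof -
  define R where "R n k \<longleftrightarrow> k \<noteq> n \<and> coprime n (int q) \<and> coprime k (int q) \<and> [n = k] (mod int q)"
    for n k
  have "norm (of_real (\<Sum>\<xi>\<in>G1 q. (cmod (\<Sum>n\<in>{M+1..M+int N}. a n * \<xi> n))\<^sup>2) -
          complex_of_real (real (totient q) * D))
        \<le> real (totient q) * real (2 * (N div q)) * D"
    unfolding of_real_sum_norm_sum_squared D_def
  proof (rule norm_quadratic_form_minus_diagonal_le)
    show "card {k \<in> {M+1..M+int N}. R n k} \<le> 2 * (N div q)" if "n \<in> {M+1..M+int N}" for n
      using card_cong_in_interval_le[OF q that] unfolding R_def
      by (rule order.trans[rotated]) (rule card_mono[OF finite_subset[of _ "{M+1..M+int N}"]], auto)
    show "norm (\<Sum>\<xi>\<in>G1 q. \<xi> n * cnj (\<xi> k)) \<le> (if R n k then real (totient q) else 0)"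
      if "k \<noteq> n" for n k
    proof -
      have "R n k \<longleftrightarrow> coprime n (int q) \<and> coprime k (int q) \<and> [n = k] (mod int q)"
        using that by (simp add: R_def)
      then show ?thesis using norm_sum_G1_mult_cnj_le[OF q, of n k] by (simp only:)
    qed
  qed (use sum_G1_mult_cnj_diagonal[OF q] in \<open>auto simp: R_def cong_sym_eq\<close>)
  then show ?thesis by (simp only: of_real_diff[symmetric] norm_of_real)
qed

theorem G1_mean_square_estimate:
  fixes a :: "int \<Rightarrow> complex" and M :: int and N q :: nat
  assumes q: "q > 0"
  defines "D \<equiv> (\<Sum>n\<in>{n\<in>{M+1..M+int N}. coprime n (int q)}. (cmod (a n))\<^sup>2)"
  shows "\<bar>(real q / real (totient q)) * (\<Sum>\<xi>\<in>G1 q. (cmod (\<Sum>n\<in>{M+1..M+int N}. a n * \<xi> n))\<^sup>2)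
            - real q * D\<bar> \<le> 2 * real N * D"
proof -
  define L where "L = (\<Sum>\<xi>\<in>G1 q. (cmod (\<Sum>n\<in>{M+1..M+int N}. a n * \<xi> n))\<^sup>2)"
  define phi where "phi = real (totient q)"
  have phi: "phi > 0" using q by (simp add: phi_def)
  have "(real q / phi) * L - real q * D = (real q / phi) * (L - phi * D)"
    using phi by (simp add: field_simps)
  then have "\<bar>(real q / phi) * L - real q * D\<bar> = (real q / phi) * \<bar>L - phi * D\<bar>"
    using phi by (simp add: abs_mult)
  also have "\<dots> \<le> (real q / phi) * (phi * real (2 * (N div q)) * D)"
    using G1_mean_square_minus_diagonal_le[OF q, of a M N] phi
    by (intro mult_left_mono) (simp_all add: L_def phi_def D_def)
  also have "\<dots> = 2 * real (q * (N div q)) * D" using phi by simp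
  also have "\<dots> \<le> 2 * real N * D"
    using times_div_less_eq_dividend[of q N] unfolding D_def
    by (intro mult_right_mono mult_left_mono sum_nonneg of_nat_mono) simp_all
  finally show ?thesis by (simp add: L_def phi_def)
qed

lemma G1_mean_square_le:
  fixes a :: "int \<Rightarrow> complex" and M :: int and N q :: nat
  assumes q: "q > 0"
  shows "(real q / real (totient q)) * (\<Sum>\<xi>\<in>G1 q. (cmod (\<Sum>n\<in>{M+1..M+int N}. a n * \<xi> n))\<^sup>2)
         \<le> (real q + 2 * real N) * (\<Sum>n\<in>{M+1..M+int N}. (cmod (a n))\<^sup>2)"
proof -
  define D where "D = (\<Sum>n\<in>{n\<in>{M+1..M+int N}. coprime n (int q)}. (cmod (a n))\<^sup>2)"
  have "D \<le> (\<Sum>n\<in>{M+1..M+int N}. (cmod (a n))\<^sup>2)" unfolding D_def by (rule sum_mono2) auto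
  have "(real q / real (totient q)) * (\<Sum>\<xi>\<in>G1 q. (cmod (\<Sum>n\<in>{M+1..M+int N}. a n * \<xi> n))\<^sup>2)
        \<le> (real q + 2 * real N) * D"
    using G1_mean_square_estimate[OF q, of a M N] by (simp add: D_def abs_le_iff algebra_simps)
  also have "\<dots> \<le> (real q + 2 * real N) * (\<Sum>n\<in>{M+1..M+int N}. (cmod (a n))\<^sup>2)"
    using \<open>D \<le> _\<close> by (rule mult_left_mono) simp
  finally show ?thesis .
qed

theorem sum_G1_mean_square_le:
  fixes a :: "int \<Rightarrow> complex" and M :: int and N Q :: nat
  shows "(\<Sum>q=1..Q. (real q / real (totient q)) *
            (\<Sum>\<xi>\<in>G1 q. (cmod (\<Sum>n\<in>{M+1..M+int N}. a n * \<xi> n))\<^sup>2))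
         \<le> 2 * (real Q ^ 2 + real Q * real N) * (\<Sum>n\<in>{M+1..M+int N}. (cmod (a n))\<^sup>2)"
proof -
  define A where "A = (\<Sum>n\<in>{M+1..M+int N}. (cmod (a n))\<^sup>2)"
  have "A \<ge> 0" unfolding A_def by (rule sum_nonneg) simp
  have "(\<Sum>q=1..Q. (real q / real (totient q)) *
            (\<Sum>\<xi>\<in>G1 q. (cmod (\<Sum>n\<in>{M+1..M+int N}. a n * \<xi> n))\<^sup>2))
        \<le> (\<Sum>q=1..Q. (real Q + 2 * real N) * A)"
    unfolding A_def
    by (rule sum_mono, rule order.trans[OF G1_mean_square_le]) (auto intro!: mult_right_mono sum_nonneg)
  also have "\<dots> \<le> 2 * (real Q ^ 2 + real Q * real N) * A"
    using \<open>A \<ge> 0\<close> by (simp add: power2_eq_square algebra_simps mult_right_mono)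
  finally show ?thesis by (simp add: A_def)
qed

theorem mainTheorem2:
  shows "(\<exists>C::real. \<forall>(M::int) (N::nat) (q::nat) (a::int \<Rightarrow> complex). q > 0 \<longrightarrow>
           \<bar>(real q / real (totient q)) *
              (\<Sum>\<xi>\<in>G1 q. (cmod (\<Sum>n\<in>{M+1..M+int N}. a n * \<xi> n))^2)
            - real q * (\<Sum>n\<in>{n\<in>{M+1..M+int N}. coprime n (int q)}. (cmod (a n))^2)\<bar>
           \<le> C * real N * (\<Sum>n\<in>{n\<in>{M+1..M+int N}. coprime n (int q)}. (cmod (a n))^2))
       \<and> (\<exists>C::real. \<forall>(M::int) (N::nat) (Q::nat) (a::int \<Rightarrow> complex).
           (\<Sum>q=1..Q. (real q / real (totient q)) *
              (\<Sum>\<xi>\<in>G1 q. (cmod (\<Sum>n\<in>{M+1..M+int N}. a n * \<xi> n))^2))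
           \<le> C * (real Q ^ 2 + real Q * real N) * (\<Sum>n\<in>{M+1..M+int N}. (cmod (a n))^2))"
  by (intro conjI exI[of _ 2] allI impI G1_mean_square_estimate sum_G1_mean_square_le)

end
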